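(* Let $R$ be a commutative noetherian ring, $\mathfrak{a}$ an ideal contained in the Jacobson radical of $R$, and $M$ a finitely generated $R$-module. Then among the $\mathfrak{a}$-adically complete $R$-submodules of $M$ there is a unique maximal one (with respect to inclusion).
   Context: A module $N$ is $\mathfrak{a}$-adically complete if the natural map $N\to \varprojlim_n N/\mathfrak{a}^nN$ is an isomorphism. The unique maximal $\mathfrak{a}$-adically complete submodule of $M$ is denoted $C_{\mathfrak{a}}(M)$ (the analytic conductor of $M$). *)

theory Defs
  imports "HOL-Algebra.Module" "HOL-Algebra.Ring_Divisibility"
begin

definition jacobson_radical :: "('a, 'c) ring_scheme \<Rightarrow> 'a set" where
  "jacobson_radical R = carrier R \<inter> \<Inter> {m. maximalideal m R}"

definition submod_span :: "('a, 'c) ring_scheme \<Rightarrow> ('a, 'b, 'd) module_scheme \<Rightarrow> 'b set \<Rightarrow> 'b set" where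
  "submod_span R M S = \<Inter> {H. submodule H R M \<and> S \<subseteq> H}"

definition finitely_generated_module :: "('a, 'c) ring_scheme \<Rightarrow> ('a, 'b, 'd) module_scheme \<Rightarrow> bool" where
  "finitely_generated_module R M \<longleftrightarrow>
     (\<exists>S. finite S \<and> S \<subseteq> carrier M \<and> submod_span R M S = carrier M)"

definition ideal_smult_submod :: "('a, 'c) ring_scheme \<Rightarrow> ('a, 'b, 'd) module_scheme \<Rightarrow> 'a set \<Rightarrow> 'b set \<Rightarrow> 'b set" where
  "ideal_smult_submod R M I N = submod_span R M {r \<odot>\<^bsub>M\<^esub> x | r x. r \<in> I \<and> x \<in> N}"

fun adic_pow :: "('a, 'c) ring_scheme \<Rightarrow> ('a, 'b, 'd) module_scheme \<Rightarrow> 'a set \<Rightarrow> 'b set \<Rightarrow> nat \<Rightarrow> 'b set" where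
  "adic_pow R M I N 0 = N"
| "adic_pow R M I N (Suc n) = ideal_smult_submod R M I (adic_pow R M I N n)"

text \<open>N is I-adically complete: the natural map N \<rightarrow> lim N/I^n N is bijective.
  Injectivity: the intersection of the I^n N is zero.  Surjectivity: every element
  of the inverse limit, i.e. every compatible sequence of cosets x_n + I^n N
  (given by representatives x_n with x_(n+1) - x_n in I^n N), comes from an element of N.\<close>
definition adically_complete :: "('a, 'c) ring_scheme \<Rightarrow> ('a, 'b, 'd) module_scheme \<Rightarrow> 'a set \<Rightarrow> 'b set \<Rightarrow> bool" where
  "adically_complete R M I N \<longleftrightarrow>
     (\<Inter>n. adic_pow R M I N n) = {\<zero>\<^bsub>M\<^esub>} \<and>
     (\<forall>x. (\<forall>n. x n \<in> N) \<and> (\<forall>n. x (Suc n) \<ominus>\<^bsub>M\<^esub> x n \<in> adic_pow R M I N n) \<longrightarrow>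
        (\<exists>y\<in>N. \<forall>n. y \<ominus>\<^bsub>M\<^esub> x n \<in> adic_pow R M I N n))"

end

(* Over a noetherian ring, Krull's intersection theorem gives \<Inter>\<^sub>n I\<^sup>n M = 0 for I in the
   Jacobson radical: the submodule K maximal with K \<inter> N = I N, N = \<Inter>\<^sub>n I\<^sup>n M, contains a
   power I\<^sup>n M, so N = I N and N = 0 by Nakayama.  Consequently the sum A + B of two I-adically
   complete submodules is again complete: it is separated because M is, and since
   I\<^sup>n (A + B) = I\<^sup>n A + I\<^sup>n B, a Cauchy sequence in A + B splits into Cauchy sequences in A
   and B whose limits add up.  As M is a noetherian module, the complete submodules have a
   maximal member C, and C + N = C for every complete N; so C is the greatest complete
   submodule, in particular the unique maximal one. *)

theory Submission
  imports Defs
begin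

definition cyclic_submod :: "('a, 'c) ring_scheme \<Rightarrow> ('a, 'b, 'd) module_scheme \<Rightarrow> 'b \<Rightarrow> 'b set" where
  "cyclic_submod R M s = (\<lambda>r. r \<odot>\<^bsub>M\<^esub> s) ` carrier R"

definition scalar_multiples :: "('a, 'b, 'd) module_scheme \<Rightarrow> 'a \<Rightarrow> 'b set" where
  "scalar_multiples M c = (\<lambda>x. c \<odot>\<^bsub>M\<^esub> x) ` carrier M"

definition adic_cauchy ::
    "('a, 'c) ring_scheme \<Rightarrow> ('a, 'b, 'd) module_scheme \<Rightarrow> 'a set \<Rightarrow> 'b set \<Rightarrow> (nat \<Rightarrow> 'b) \<Rightarrow> bool" where
  "adic_cauchy R M I N x \<longleftrightarrow> (\<forall>n. x n \<in> N) \<and> (\<forall>n. x (Suc n) \<ominus>\<^bsub>M\<^esub> x n \<in> adic_pow R M I N n)"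

context module
begin

lemma submodule_zero: "submodule H R M \<Longrightarrow> \<zero>\<^bsub>M\<^esub> \<in> H"
  using subgroup.one_closed[OF submodule.axioms(1)] by fastforce

lemma submodule_minus: "submodule H R M \<Longrightarrow> a \<in> H \<Longrightarrow> b \<in> H \<Longrightarrow> a \<ominus>\<^bsub>M\<^esub> b \<in> H"
  unfolding a_minus_def using submoduleE(3,5) by blast

lemma smult_comm: "a \<in> carrier R \<Longrightarrow> b \<in> carrier R \<Longrightarrow> x \<in> carrier M \<Longrightarrow>
    a \<odot>\<^bsub>M\<^esub> (b \<odot>\<^bsub>M\<^esub> x) = b \<odot>\<^bsub>M\<^esub> (a \<odot>\<^bsub>M\<^esub> x)"
  by (metis R.m_comm smult_assoc1)

lemma submodule_Inter:
  assumes F: "F \<noteq> {}" and sub: "\<And>H. H \<in> F \<Longrightarrow> submodule H R M"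
  shows "submodule (\<Inter>F) R M"
proof (rule submoduleI)
  show "\<Inter>F \<subseteq> carrier M"
    using F submoduleE(1)[OF sub] by blast
  show "\<zero>\<^bsub>M\<^esub> \<in> \<Inter>F"
    using submodule_zero[OF sub] by blast
  show "\<ominus>\<^bsub>M\<^esub> a \<in> \<Inter>F" if "a \<in> \<Inter>F" for a
    using that submoduleE(3)[OF sub] by blast
  show "a \<oplus>\<^bsub>M\<^esub> b \<in> \<Inter>F" if "a \<in> \<Inter>F" "b \<in> \<Inter>F" for a b
    using that submoduleE(5)[OF sub] by blast
  show "c \<odot>\<^bsub>M\<^esub> a \<in> \<Inter>F" if "c \<in> carrier R" "a \<in> \<Inter>F" for c a
    using that submoduleE(4)[OF sub] by blast
qed

lemma submod_span_submodule: "S \<subseteq> carrier M \<Longrightarrow> submodule (submod_span R M S) R M"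
  unfolding submod_span_def using carrier_is_submodule by (intro submodule_Inter) auto

lemma submod_span_superset: "S \<subseteq> submod_span R M S"
  unfolding submod_span_def by blast

lemma submod_span_least: "submodule H R M \<Longrightarrow> S \<subseteq> H \<Longrightarrow> submod_span R M S \<subseteq> H"
  unfolding submod_span_def by blast

lemma submodule_Int:
  assumes A: "submodule A R M" and B: "submodule B R M"
  shows "submodule (A \<inter> B) R M"
proof -
  have "submodule (\<Inter>{A, B}) R M"
    by (rule submodule_Inter) (auto intro: A B)
  then show ?thesis
    by simp
qed

lemma zero_submodule: "submodule {\<zero>\<^bsub>M\<^esub>} R M"
  by (rule submoduleI) auto

lemma smult_preimage_submodule:
  assumes W: "submodule W R M" and c: "c \<in> carrier R"
  shows "submodule {x \<in> carrier M. c \<odot>\<^bsub>M\<^esub> x \<in> W} R M"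
proof (rule submoduleI)
  show "\<zero>\<^bsub>M\<^esub> \<in> {x \<in> carrier M. c \<odot>\<^bsub>M\<^esub> x \<in> W}"
    using c submodule_zero[OF W] by simp
  show "\<ominus>\<^bsub>M\<^esub> x \<in> {x \<in> carrier M. c \<odot>\<^bsub>M\<^esub> x \<in> W}" if "x \<in> {x \<in> carrier M. c \<odot>\<^bsub>M\<^esub> x \<in> W}" for x
    using that c smult_r_minus submoduleE(3)[OF W] by auto
  show "x \<oplus>\<^bsub>M\<^esub> y \<in> {x \<in> carrier M. c \<odot>\<^bsub>M\<^esub> x \<in> W}"
    if "x \<in> {x \<in> carrier M. c \<odot>\<^bsub>M\<^esub> x \<in> W}" "y \<in> {x \<in> carrier M. c \<odot>\<^bsub>M\<^esub> x \<in> W}" for x y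
    using that c smult_r_distr submoduleE(5)[OF W] by auto
  show "r \<odot>\<^bsub>M\<^esub> x \<in> {x \<in> carrier M. c \<odot>\<^bsub>M\<^esub> x \<in> W}"
    if "r \<in> carrier R" "x \<in> {x \<in> carrier M. c \<odot>\<^bsub>M\<^esub> x \<in> W}" for r x
    using that c submoduleE(4)[OF W] by (auto simp: smult_comm[of c r])
qed blast

lemma smult_submod_span:
  assumes "submodule W R M" and "c \<in> carrier R" and "U \<subseteq> carrier M"
    and "\<And>u. u \<in> U \<Longrightarrow> c \<odot>\<^bsub>M\<^esub> u \<in> W" and "x \<in> submod_span R M U"
  shows "c \<odot>\<^bsub>M\<^esub> x \<in> W"
  using submod_span_least[OF smult_preimage_submodule[OF assms(1,2)], of U] assms(3-5) by blast

lemma colon_ideal: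
  assumes P: "submodule P R M" and x: "x \<in> carrier M"
  shows "ideal {r \<in> carrier R. r \<odot>\<^bsub>M\<^esub> x \<in> P} R"
proof (rule idealI[OF R.ring_axioms])
  show "subgroup {r \<in> carrier R. r \<odot>\<^bsub>M\<^esub> x \<in> P} (add_monoid R)"
    using x submodule_zero[OF P] submoduleE(3,5)[OF P]
    by (intro R.add.subgroupI) (auto simp: smult_l_distr smult_l_minus simp flip: a_inv_def)
  show "b \<otimes>\<^bsub>R\<^esub> a \<in> {r \<in> carrier R. r \<odot>\<^bsub>M\<^esub> x \<in> P}" "a \<otimes>\<^bsub>R\<^esub> b \<in> {r \<in> carrier R. r \<odot>\<^bsub>M\<^esub> x \<in> P}"
    if a: "a \<in> {r \<in> carrier R. r \<odot>\<^bsub>M\<^esub> x \<in> P}" and b: "b \<in> carrier R" for a b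
  proof -
    have "(b \<otimes>\<^bsub>R\<^esub> a) \<odot>\<^bsub>M\<^esub> x \<in> P"
      using a b x submoduleE(4)[OF P] by (simp add: smult_assoc1)
    then show "b \<otimes>\<^bsub>R\<^esub> a \<in> {r \<in> carrier R. r \<odot>\<^bsub>M\<^esub> x \<in> P}" "a \<otimes>\<^bsub>R\<^esub> b \<in> {r \<in> carrier R. r \<odot>\<^bsub>M\<^esub> x \<in> P}"
      using a b by (simp_all add: R.m_comm)
  qed
qed

lemma set_addI: "a \<in> A \<Longrightarrow> b \<in> B \<Longrightarrow> a \<oplus>\<^bsub>M\<^esub> b \<in> A <+>\<^bsub>M\<^esub> B"
  unfolding set_add_def' by blast

lemma set_addE:
  assumes "x \<in> A <+>\<^bsub>M\<^esub> B"
  obtains a b where "a \<in> A" "b \<in> B" "x = a \<oplus>\<^bsub>M\<^esub> b"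
  using assms unfolding set_add_def' by blast

lemma set_add_submodule:
  assumes A: "submodule A R M" and B: "submodule B R M"
  shows "submodule (A <+>\<^bsub>M\<^esub> B) R M"
proof (intro submodule.intro submodule_axioms.intro)
  show "subgroup (A <+>\<^bsub>M\<^esub> B) (add_monoid M)"
    using add_additive_subgroups[of A B] submodule.axioms(1)[OF A] submodule.axioms(1)[OF B]
    unfolding additive_subgroup_def by blast
  show "r \<odot>\<^bsub>M\<^esub> x \<in> A <+>\<^bsub>M\<^esub> B" if r: "r \<in> carrier R" and x: "x \<in> A <+>\<^bsub>M\<^esub> B" for r x
  proof -
    obtain a b where ab: "a \<in> A" "b \<in> B" "x = a \<oplus>\<^bsub>M\<^esub> b"
      using x by (rule set_addE)
    moreover have "a \<in> carrier M" "b \<in> carrier M"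
      using ab submoduleE(1)[OF A] submoduleE(1)[OF B] by auto
    ultimately have "r \<odot>\<^bsub>M\<^esub> x = r \<odot>\<^bsub>M\<^esub> a \<oplus>\<^bsub>M\<^esub> r \<odot>\<^bsub>M\<^esub> b"
      using r by (simp add: smult_r_distr)
    then show ?thesis
      using set_addI[OF submoduleE(4)[OF A r ab(1)] submoduleE(4)[OF B r ab(2)]] by simp
  qed
qed

lemma set_add_upper1: "submodule B R M \<Longrightarrow> A \<subseteq> carrier M \<Longrightarrow> A \<subseteq> A <+>\<^bsub>M\<^esub> B"
  using set_addI[of _ A "\<zero>\<^bsub>M\<^esub>" B] submodule_zero by fastforce

lemma set_add_upper2: "submodule A R M \<Longrightarrow> B \<subseteq> carrier M \<Longrightarrow> B \<subseteq> A <+>\<^bsub>M\<^esub> B"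
  using set_addI[of "\<zero>\<^bsub>M\<^esub>" A _ B] submodule_zero by fastforce

lemma set_add_least: "submodule H R M \<Longrightarrow> A \<subseteq> H \<Longrightarrow> B \<subseteq> H \<Longrightarrow> A <+>\<^bsub>M\<^esub> B \<subseteq> H"
  by (auto elim!: set_addE intro: submoduleE(5))

lemma cyclic_submodule:
  assumes s: "s \<in> carrier M"
  shows "submodule (cyclic_submod R M s) R M"
  unfolding cyclic_submod_def
proof (rule submoduleI)
  show "\<zero>\<^bsub>M\<^esub> \<in> (\<lambda>r. r \<odot>\<^bsub>M\<^esub> s) ` carrier R"
    using s by (intro rev_image_eqI[OF R.zero_closed]) simp
  show "\<ominus>\<^bsub>M\<^esub> x \<in> (\<lambda>r. r \<odot>\<^bsub>M\<^esub> s) ` carrier R" if x: "x \<in> (\<lambda>r. r \<odot>\<^bsub>M\<^esub> s) ` carrier R" for x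
  proof -
    obtain a where "a \<in> carrier R" "x = a \<odot>\<^bsub>M\<^esub> s"
      using x by blast
    then show ?thesis
      using s by (intro rev_image_eqI[of "\<ominus>\<^bsub>R\<^esub> a"]) (simp_all add: smult_l_minus)
  qed
  show "x \<oplus>\<^bsub>M\<^esub> y \<in> (\<lambda>r. r \<odot>\<^bsub>M\<^esub> s) ` carrier R"
    if x: "x \<in> (\<lambda>r. r \<odot>\<^bsub>M\<^esub> s) ` carrier R" "y \<in> (\<lambda>r. r \<odot>\<^bsub>M\<^esub> s) ` carrier R" for x y
  proof -
    obtain a b where "a \<in> carrier R" "b \<in> carrier R" "x = a \<odot>\<^bsub>M\<^esub> s" "y = b \<odot>\<^bsub>M\<^esub> s"
      using x by blast
    then show ?thesis
      using s by (intro rev_image_eqI[of "a \<oplus>\<^bsub>R\<^esub> b"]) (simp_all add: smult_l_distr)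
  qed
  show "c \<odot>\<^bsub>M\<^esub> x \<in> (\<lambda>r. r \<odot>\<^bsub>M\<^esub> s) ` carrier R"
    if c: "c \<in> carrier R" and x: "x \<in> (\<lambda>r. r \<odot>\<^bsub>M\<^esub> s) ` carrier R" for c x
  proof -
    obtain a where "a \<in> carrier R" "x = a \<odot>\<^bsub>M\<^esub> s"
      using x by blast
    then show ?thesis
      using c s by (intro rev_image_eqI[of "c \<otimes>\<^bsub>R\<^esub> a"]) (simp_all add: smult_assoc1)
  qed
qed (use s in blast)

lemma scalar_multiples_submodule:
  assumes c: "c \<in> carrier R"
  shows "submodule (scalar_multiples M c) R M"
  unfolding scalar_multiples_def
proof (rule submoduleI)
  show "\<zero>\<^bsub>M\<^esub> \<in> (\<lambda>x. c \<odot>\<^bsub>M\<^esub> x) ` carrier M"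
    using c by (intro rev_image_eqI[OF M.zero_closed]) simp
  show "\<ominus>\<^bsub>M\<^esub> x \<in> (\<lambda>x. c \<odot>\<^bsub>M\<^esub> x) ` carrier M" if x: "x \<in> (\<lambda>x. c \<odot>\<^bsub>M\<^esub> x) ` carrier M" for x
  proof -
    obtain a where "a \<in> carrier M" "x = c \<odot>\<^bsub>M\<^esub> a"
      using x by blast
    then show ?thesis
      using c by (intro rev_image_eqI[of "\<ominus>\<^bsub>M\<^esub> a"]) (simp_all add: smult_r_minus)
  qed
  show "x \<oplus>\<^bsub>M\<^esub> y \<in> (\<lambda>x. c \<odot>\<^bsub>M\<^esub> x) ` carrier M"
    if x: "x \<in> (\<lambda>x. c \<odot>\<^bsub>M\<^esub> x) ` carrier M" "y \<in> (\<lambda>x. c \<odot>\<^bsub>M\<^esub> x) ` carrier M" for x y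
  proof -
    obtain a b where "a \<in> carrier M" "b \<in> carrier M" "x = c \<odot>\<^bsub>M\<^esub> a" "y = c \<odot>\<^bsub>M\<^esub> b"
      using x by blast
    then show ?thesis
      using c by (intro rev_image_eqI[of "a \<oplus>\<^bsub>M\<^esub> b"]) (simp_all add: smult_r_distr)
  qed
  show "r \<odot>\<^bsub>M\<^esub> x \<in> (\<lambda>x. c \<odot>\<^bsub>M\<^esub> x) ` carrier M"
    if r: "r \<in> carrier R" and x: "x \<in> (\<lambda>x. c \<odot>\<^bsub>M\<^esub> x) ` carrier M" for r x
  proof -
    obtain a where "a \<in> carrier M" "x = c \<odot>\<^bsub>M\<^esub> a"
      using x by blast
    then show ?thesis
      using r c by (intro rev_image_eqI[of "r \<odot>\<^bsub>M\<^esub> a"]) (simp_all add: smult_comm[of c r])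
  qed
qed (use c in blast)

section \<open>Ideal-adic filtrations\<close>

lemma ideal_smult_submod_submodule:
  "I \<subseteq> carrier R \<Longrightarrow> X \<subseteq> carrier M \<Longrightarrow> submodule (ideal_smult_submod R M I X) R M"
  unfolding ideal_smult_submod_def by (rule submod_span_submodule) blast

lemma ideal_smult_submodI: "r \<in> I \<Longrightarrow> x \<in> X \<Longrightarrow> r \<odot>\<^bsub>M\<^esub> x \<in> ideal_smult_submod R M I X"
proof -
  assume "r \<in> I" "x \<in> X"
  then have "r \<odot>\<^bsub>M\<^esub> x \<in> {r \<odot>\<^bsub>M\<^esub> x | r x. r \<in> I \<and> x \<in> X}"
    by blast
  then show ?thesis
    unfolding ideal_smult_submod_def by (rule subsetD[OF submod_span_superset])
qed

lemma ideal_smult_submod_least: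
  "submodule W R M \<Longrightarrow> (\<And>r x. r \<in> I \<Longrightarrow> x \<in> X \<Longrightarrow> r \<odot>\<^bsub>M\<^esub> x \<in> W) \<Longrightarrow>
    ideal_smult_submod R M I X \<subseteq> W"
  unfolding ideal_smult_submod_def by (rule submod_span_least) blast+

lemma ideal_smult_submod_subset:
  assumes X: "submodule X R M" and I: "I \<subseteq> carrier R"
  shows "ideal_smult_submod R M I X \<subseteq> X"
  using I submoduleE(4)[OF X] by (intro ideal_smult_submod_least[OF X]) blast

lemma ideal_smult_submod_mono:
  assumes I: "I \<subseteq> carrier R" and Y: "Y \<subseteq> carrier M" and XY: "X \<subseteq> Y"
  shows "ideal_smult_submod R M I X \<subseteq> ideal_smult_submod R M I Y"
  using XY ideal_smult_submodI[of _ I _ Y]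
  by (intro ideal_smult_submod_least[OF ideal_smult_submod_submodule[OF I Y]]) blast

lemma ideal_smult_submod_span:
  assumes I: "I \<subseteq> carrier R" and U: "U \<subseteq> carrier M" and W: "submodule W R M"
    and gen: "\<And>r u. r \<in> I \<Longrightarrow> u \<in> U \<Longrightarrow> r \<odot>\<^bsub>M\<^esub> u \<in> W"
  shows "ideal_smult_submod R M I (submod_span R M U) \<subseteq> W"
proof (rule ideal_smult_submod_least[OF W])
  fix r x assume r: "r \<in> I" and x: "x \<in> submod_span R M U"
  show "r \<odot>\<^bsub>M\<^esub> x \<in> W"
    using I r by (intro smult_submod_span[OF W _ U gen[OF r] x]) blast
qed

lemma ideal_smult_submod_set_add:
  assumes I: "I \<subseteq> carrier R" and A: "submodule A R M" and B: "submodule B R M"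
  shows "ideal_smult_submod R M I (A <+>\<^bsub>M\<^esub> B) =
    ideal_smult_submod R M I A <+>\<^bsub>M\<^esub> ideal_smult_submod R M I B"
proof
  note A' = submoduleE(1)[OF A] and B' = submoduleE(1)[OF B]
  have AB: "A <+>\<^bsub>M\<^esub> B \<subseteq> carrier M"
    using submoduleE(1)[OF set_add_submodule[OF A B]] .
  show "ideal_smult_submod R M I (A <+>\<^bsub>M\<^esub> B) \<subseteq>
      ideal_smult_submod R M I A <+>\<^bsub>M\<^esub> ideal_smult_submod R M I B"
  proof (rule ideal_smult_submod_least)
    show "submodule (ideal_smult_submod R M I A <+>\<^bsub>M\<^esub> ideal_smult_submod R M I B) R M"
      using I A' B' by (intro set_add_submodule ideal_smult_submod_submodule)
    fix r x assume r: "r \<in> I" and x: "x \<in> A <+>\<^bsub>M\<^esub> B"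
    obtain a b where ab: "a \<in> A" "b \<in> B" "x = a \<oplus>\<^bsub>M\<^esub> b"
      using x by (rule set_addE)
    moreover have "r \<in> carrier R" "a \<in> carrier M" "b \<in> carrier M"
      using r ab I A' B' by auto
    ultimately have "r \<odot>\<^bsub>M\<^esub> x = r \<odot>\<^bsub>M\<^esub> a \<oplus>\<^bsub>M\<^esub> r \<odot>\<^bsub>M\<^esub> b"
      by (simp add: smult_r_distr)
    then show "r \<odot>\<^bsub>M\<^esub> x \<in> ideal_smult_submod R M I A <+>\<^bsub>M\<^esub> ideal_smult_submod R M I B"
      using set_addI[OF ideal_smult_submodI[OF r ab(1)] ideal_smult_submodI[OF r ab(2)]] by simp
  qed
  show "ideal_smult_submod R M I A <+>\<^bsub>M\<^esub> ideal_smult_submod R M I B \<subseteq>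
      ideal_smult_submod R M I (A <+>\<^bsub>M\<^esub> B)"
  proof (rule set_add_least[OF ideal_smult_submod_submodule[OF I AB]])
    show "ideal_smult_submod R M I A \<subseteq> ideal_smult_submod R M I (A <+>\<^bsub>M\<^esub> B)"
      by (rule ideal_smult_submod_mono[OF I AB set_add_upper1[OF B A']])
    show "ideal_smult_submod R M I B \<subseteq> ideal_smult_submod R M I (A <+>\<^bsub>M\<^esub> B)"
      by (rule ideal_smult_submod_mono[OF I AB set_add_upper2[OF A B']])
  qed
qed

lemma adic_pow_submodule:
  assumes N: "submodule N R M" and I: "I \<subseteq> carrier R"
  shows "submodule (adic_pow R M I N n) R M"
proof (induction n)
  case (Suc n)
  then show ?case
    using ideal_smult_submod_submodule[OF I submoduleE(1)[OF Suc.IH]] by simp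
qed (use N in simp)

lemma adic_pow_antimono:
  assumes N: "submodule N R M" and I: "I \<subseteq> carrier R" and "n \<le> m"
  shows "adic_pow R M I N m \<subseteq> adic_pow R M I N n"
proof -
  have "adic_pow R M I N (Suc k) \<subseteq> adic_pow R M I N k" for k
    using ideal_smult_submod_subset[OF adic_pow_submodule[OF N I] I] by simp
  then show ?thesis
    using lift_Suc_antimono_le[of "adic_pow R M I N"] \<open>n \<le> m\<close> by blast
qed

lemma adic_pow_subset: "submodule N R M \<Longrightarrow> I \<subseteq> carrier R \<Longrightarrow> adic_pow R M I N n \<subseteq> N"
  using adic_pow_antimono[of N I 0 n] by simp

lemma adic_pow_mono:
  assumes N': "submodule N' R M" and I: "I \<subseteq> carrier R" and "N \<subseteq> N'"
  shows "adic_pow R M I N n \<subseteq> adic_pow R M I N' n"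
proof (induction n)
  case (Suc n)
  then show ?case
    using ideal_smult_submod_mono[OF I submoduleE(1)[OF adic_pow_submodule[OF N' I]]] by simp
qed (use \<open>N \<subseteq> N'\<close> in simp)

lemma adic_pow_set_add:
  assumes I: "I \<subseteq> carrier R" and A: "submodule A R M" and B: "submodule B R M"
  shows "adic_pow R M I (A <+>\<^bsub>M\<^esub> B) n = adic_pow R M I A n <+>\<^bsub>M\<^esub> adic_pow R M I B n"
proof (induction n)
  case (Suc n)
  then show ?case
    using ideal_smult_submod_set_add[OF I adic_pow_submodule[OF A I] adic_pow_submodule[OF B I]]
    by simp
qed simp

lemma adic_pow_zero:
  assumes I: "I \<subseteq> carrier R"
  shows "adic_pow R M I {\<zero>\<^bsub>M\<^esub>} n = {\<zero>\<^bsub>M\<^esub>}"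
  using adic_pow_subset[OF zero_submodule I] submodule_zero[OF adic_pow_submodule[OF zero_submodule I]]
  by blast

section \<open>Completeness of a sum of complete submodules\<close>

lemma plus_minus_cancel_left:
  assumes "x \<in> carrier M" and "y \<in> carrier M"
  shows "(x \<oplus>\<^bsub>M\<^esub> y) \<ominus>\<^bsub>M\<^esub> x = y"
proof -
  have "(x \<oplus>\<^bsub>M\<^esub> y) \<ominus>\<^bsub>M\<^esub> x = y \<oplus>\<^bsub>M\<^esub> (x \<oplus>\<^bsub>M\<^esub> \<ominus>\<^bsub>M\<^esub> x)"
    using assms by (simp add: a_minus_def M.a_ac)
  then show ?thesis
    using assms by (simp add: M.r_neg)
qed

lemma plus_minus_cancel_right:
  assumes "x \<in> carrier M" and "y \<in> carrier M"
  shows "(x \<oplus>\<^bsub>M\<^esub> y) \<ominus>\<^bsub>M\<^esub> y = x"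
  using plus_minus_cancel_left[OF assms(2,1)] assms by (simp add: M.a_comm)

lemma plus_minus_eq:
  assumes "x \<in> carrier M" and "y \<in> carrier M"
  shows "x \<oplus>\<^bsub>M\<^esub> (y \<ominus>\<^bsub>M\<^esub> x) = y"
proof -
  have "x \<oplus>\<^bsub>M\<^esub> (y \<ominus>\<^bsub>M\<^esub> x) = y \<oplus>\<^bsub>M\<^esub> (x \<oplus>\<^bsub>M\<^esub> \<ominus>\<^bsub>M\<^esub> x)"
    using assms by (simp add: a_minus_def M.a_ac)
  then show ?thesis
    using assms by (simp add: M.r_neg)
qed

lemma plus_minus_plus_distrib:
  "\<lbrakk>x \<in> carrier M; y \<in> carrier M; u \<in> carrier M; v \<in> carrier M\<rbrakk> \<Longrightarrow>
    (x \<oplus>\<^bsub>M\<^esub> y) \<ominus>\<^bsub>M\<^esub> (u \<oplus>\<^bsub>M\<^esub> v) = (x \<ominus>\<^bsub>M\<^esub> u) \<oplus>\<^bsub>M\<^esub> (y \<ominus>\<^bsub>M\<^esub> v)"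
  by (simp add: a_minus_def M.minus_add M.a_ac)

lemma adically_complete_limit:
  "adically_complete R M I N \<Longrightarrow> adic_cauchy R M I N x \<Longrightarrow>
    \<exists>y\<in>N. \<forall>n. y \<ominus>\<^bsub>M\<^esub> x n \<in> adic_pow R M I N n"
  unfolding adically_complete_def adic_cauchy_def by blast

lemma adically_complete_zero: "I \<subseteq> carrier R \<Longrightarrow> adically_complete R M I {\<zero>\<^bsub>M\<^esub>}"
  unfolding adically_complete_def by (simp add: adic_pow_zero a_minus_def)

lemma adic_cauchy_set_add_split:
  assumes I: "I \<subseteq> carrier R" and A: "submodule A R M" and B: "submodule B R M"
    and x: "adic_cauchy R M I (A <+>\<^bsub>M\<^esub> B) x"
  obtains p q where "adic_cauchy R M I A p" and "adic_cauchy R M I B q"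
    and "\<And>n. x n = p n \<oplus>\<^bsub>M\<^esub> q n"
proof -
  note A' = submoduleE(1)[OF A] and B' = submoduleE(1)[OF B]
  have "x (Suc n) \<ominus>\<^bsub>M\<^esub> x n \<in> adic_pow R M I A n <+>\<^bsub>M\<^esub> adic_pow R M I B n" for n
    using x adic_pow_set_add[OF I A B] unfolding adic_cauchy_def by simp
  then have "\<forall>n. \<exists>a\<in>adic_pow R M I A n. \<exists>b\<in>adic_pow R M I B n. x (Suc n) \<ominus>\<^bsub>M\<^esub> x n = a \<oplus>\<^bsub>M\<^esub> b"
    unfolding set_add_def' by blast
  then obtain a b where a: "\<And>n. a n \<in> adic_pow R M I A n" and b: "\<And>n. b n \<in> adic_pow R M I B n"
    and step: "\<And>n. x (Suc n) \<ominus>\<^bsub>M\<^esub> x n = a n \<oplus>\<^bsub>M\<^esub> b n"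
    by metis
  have aA: "a n \<in> A" and bB: "b n \<in> B" for n
    using a b adic_pow_subset[OF A I] adic_pow_subset[OF B I] by blast+
  obtain u v where uv: "u \<in> A" "v \<in> B" "x 0 = u \<oplus>\<^bsub>M\<^esub> v"
    using x unfolding adic_cauchy_def by (blast elim: set_addE)
  define p where "p = rec_nat u (\<lambda>n pn. pn \<oplus>\<^bsub>M\<^esub> a n)"
  define q where "q = rec_nat v (\<lambda>n qn. qn \<oplus>\<^bsub>M\<^esub> b n)"
  have p_simps: "p 0 = u" "p (Suc n) = p n \<oplus>\<^bsub>M\<^esub> a n"
    and q_simps: "q 0 = v" "q (Suc n) = q n \<oplus>\<^bsub>M\<^esub> b n" for n
    unfolding p_def q_def by simp_all
  have pA: "p n \<in> A" and qB: "q n \<in> B" for n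
    by (induction n) (use uv aA bB submoduleE(5)[OF A] submoduleE(5)[OF B] p_simps q_simps in auto)
  have carr: "p n \<in> carrier M" "q n \<in> carrier M" "a n \<in> carrier M" "b n \<in> carrier M" for n
    using pA qB aA bB A' B' by blast+
  have "adic_cauchy R M I A p" "adic_cauchy R M I B q"
    unfolding adic_cauchy_def using pA qB a b carr
    by (simp_all add: p_simps q_simps plus_minus_cancel_left)
  moreover have "x n = p n \<oplus>\<^bsub>M\<^esub> q n" for n
  proof (induction n)
    case (Suc n)
    have "x n \<in> carrier M" "x (Suc n) \<in> carrier M"
      using x set_add_closed[OF A' B'] unfolding adic_cauchy_def by blast+
    then have "x (Suc n) = x n \<oplus>\<^bsub>M\<^esub> (a n \<oplus>\<^bsub>M\<^esub> b n)"
      using step plus_minus_eq by metis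
    then show ?case
      using Suc carr by (simp add: p_simps q_simps M.a_ac)
  qed (simp add: uv p_simps q_simps)
  ultimately show ?thesis
    using that by blast
qed

lemma adically_complete_set_add:
  assumes I: "I \<subseteq> carrier R" and A: "submodule A R M" and B: "submodule B R M"
    and complete_A: "adically_complete R M I A" and complete_B: "adically_complete R M I B"
    and separated: "(\<Inter>n. adic_pow R M I (carrier M) n) = {\<zero>\<^bsub>M\<^esub>}"
  shows "adically_complete R M I (A <+>\<^bsub>M\<^esub> B)"
proof -
  have AB: "submodule (A <+>\<^bsub>M\<^esub> B) R M"
    by (rule set_add_submodule[OF A B])
  have "adic_pow R M I (A <+>\<^bsub>M\<^esub> B) n \<subseteq> adic_pow R M I (carrier M) n" for n
    by (rule adic_pow_mono[OF carrier_is_submodule I submoduleE(1)[OF AB]])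
  then have "(\<Inter>n. adic_pow R M I (A <+>\<^bsub>M\<^esub> B) n) \<subseteq> {\<zero>\<^bsub>M\<^esub>}"
    unfolding separated[symmetric] by (rule INF_mono')
  moreover have "\<zero>\<^bsub>M\<^esub> \<in> adic_pow R M I (A <+>\<^bsub>M\<^esub> B) n" for n
    by (rule submodule_zero[OF adic_pow_submodule[OF AB I]])
  ultimately have separated_AB: "(\<Inter>n. adic_pow R M I (A <+>\<^bsub>M\<^esub> B) n) = {\<zero>\<^bsub>M\<^esub>}"
    by blast
  have limit: "\<exists>y\<in>A <+>\<^bsub>M\<^esub> B. \<forall>n. y \<ominus>\<^bsub>M\<^esub> x n \<in> adic_pow R M I (A <+>\<^bsub>M\<^esub> B) n"
    if x: "adic_cauchy R M I (A <+>\<^bsub>M\<^esub> B) x" for x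
  proof -
    obtain p q where p: "adic_cauchy R M I A p" and q: "adic_cauchy R M I B q"
      and pq: "\<And>n. x n = p n \<oplus>\<^bsub>M\<^esub> q n"
      using adic_cauchy_set_add_split[OF I A B x] by blast
    obtain y1 where y1: "y1 \<in> A" "\<And>n. y1 \<ominus>\<^bsub>M\<^esub> p n \<in> adic_pow R M I A n"
      using adically_complete_limit[OF complete_A p] by blast
    obtain y2 where y2: "y2 \<in> B" "\<And>n. y2 \<ominus>\<^bsub>M\<^esub> q n \<in> adic_pow R M I B n"
      using adically_complete_limit[OF complete_B q] by blast
    have "(y1 \<oplus>\<^bsub>M\<^esub> y2) \<ominus>\<^bsub>M\<^esub> x n = (y1 \<ominus>\<^bsub>M\<^esub> p n) \<oplus>\<^bsub>M\<^esub> (y2 \<ominus>\<^bsub>M\<^esub> q n)" for n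
      using p q y1(1) y2(1) submoduleE(1)[OF A] submoduleE(1)[OF B]
      unfolding pq adic_cauchy_def by (intro plus_minus_plus_distrib) blast+
    then have "(y1 \<oplus>\<^bsub>M\<^esub> y2) \<ominus>\<^bsub>M\<^esub> x n \<in> adic_pow R M I (A <+>\<^bsub>M\<^esub> B) n" for n
      using set_addI[OF y1(2) y2(2)] adic_pow_set_add[OF I A B] by simp
    then show ?thesis
      using set_addI[OF y1(1) y2(1)] by blast
  qed
  show ?thesis
    unfolding adically_complete_def adic_cauchy_def[symmetric] using separated_AB limit by blast
qed

end

section \<open>Noetherian modules\<close>

lemma subset_chain_image_mono:
  assumes "subset.chain A C" and "\<And>X Y. X \<in> C \<Longrightarrow> Y \<in> C \<Longrightarrow> X \<subseteq> Y \<Longrightarrow> f X \<subseteq> f Y"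
    and "f ` C \<subseteq> B"
  shows "subset.chain B (f ` C)"
  using assms unfolding subset_chain_def by (metis image_iff)

text \<open>The ideal of coefficients of the last generator, as in the proof of Hilbert's basis theorem.\<close>

definition leading_coeffs ::
    "('a, 'c) ring_scheme \<Rightarrow> ('a, 'b, 'd) module_scheme \<Rightarrow> 'b set \<Rightarrow> 'b \<Rightarrow> 'b set \<Rightarrow> 'a set" where
  "leading_coeffs R M S s H = {r \<in> carrier R. r \<odot>\<^bsub>M\<^esub> s \<in> H <+>\<^bsub>M\<^esub> S}"

context module
begin

lemma set_add_mono: "A \<subseteq> A' \<Longrightarrow> B \<subseteq> B' \<Longrightarrow> A <+>\<^bsub>M\<^esub> B \<subseteq> A' <+>\<^bsub>M\<^esub> B'"
  unfolding set_add_def' by blast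

lemma cyclic_submod_self: "s \<in> carrier M \<Longrightarrow> s \<in> cyclic_submod R M s"
  unfolding cyclic_submod_def by (rule rev_image_eqI[OF R.one_closed]) simp

lemma span_insert_subset:
  assumes s: "s \<in> carrier M" and T: "T \<subseteq> carrier M"
  shows "submod_span R M (insert s T) \<subseteq> submod_span R M T <+>\<^bsub>M\<^esub> cyclic_submod R M s"
proof (rule submod_span_least)
  have S: "submodule (submod_span R M T) R M"
    by (rule submod_span_submodule[OF T])
  show "submodule (submod_span R M T <+>\<^bsub>M\<^esub> cyclic_submod R M s) R M"
    by (rule set_add_submodule[OF S cyclic_submodule[OF s]])
  have "T \<subseteq> submod_span R M T <+>\<^bsub>M\<^esub> cyclic_submod R M s"
    using submod_span_superset set_add_upper1[OF cyclic_submodule[OF s] submoduleE(1)[OF S]] by blast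
  moreover have "s \<in> submod_span R M T <+>\<^bsub>M\<^esub> cyclic_submod R M s"
    using set_add_upper2[OF S] cyclic_submod_self[OF s] submoduleE(1)[OF cyclic_submodule[OF s]] by blast
  ultimately show "insert s T \<subseteq> submod_span R M T <+>\<^bsub>M\<^esub> cyclic_submod R M s"
    by blast
qed

lemma leading_coeffs_mono: "H \<subseteq> H' \<Longrightarrow> leading_coeffs R M S s H \<subseteq> leading_coeffs R M S s H'"
  unfolding leading_coeffs_def using set_add_mono[of H H' S S] by blast

lemma leading_coeffs_ideal:
  "submodule S R M \<Longrightarrow> s \<in> carrier M \<Longrightarrow> submodule H R M \<Longrightarrow> ideal (leading_coeffs R M S s H) R"
  unfolding leading_coeffs_def by (intro colon_ideal set_add_submodule)

lemma submodule_eqI_leading_coeffs: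
  assumes S: "submodule S R M" and s: "s \<in> carrier M"
    and H: "submodule H R M" and H': "submodule H' R M" and "H \<subseteq> H'"
    and H'_subset: "H' \<subseteq> S <+>\<^bsub>M\<^esub> cyclic_submod R M s"
    and Int: "H' \<inter> S \<subseteq> H"
    and coeffs: "leading_coeffs R M S s H' \<subseteq> leading_coeffs R M S s H"
  shows "H' = H"
proof
  note carr = submoduleE(1)[OF S] submoduleE(1)[OF H] submoduleE(1)[OF H']
  show "H' \<subseteq> H"
  proof
    fix x assume x: "x \<in> H'"
    obtain t r where t: "t \<in> S" and r: "r \<in> carrier R" and x_eq: "x = t \<oplus>\<^bsub>M\<^esub> r \<odot>\<^bsub>M\<^esub> s"
      using H'_subset x unfolding cyclic_submod_def by (blast elim: set_addE)
    have tc: "t \<in> carrier M" and xc: "x \<in> carrier M"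
      using t x carr by blast+
    have "r \<odot>\<^bsub>M\<^esub> s = x \<oplus>\<^bsub>M\<^esub> \<ominus>\<^bsub>M\<^esub> t"
      using x_eq tc s r plus_minus_cancel_left[of t "r \<odot>\<^bsub>M\<^esub> s"] by (simp add: a_minus_def M.a_comm)
    then have "r \<odot>\<^bsub>M\<^esub> s \<in> H' <+>\<^bsub>M\<^esub> S"
      using set_addI[OF x submoduleE(3)[OF S t]] by simp
    then have "r \<odot>\<^bsub>M\<^esub> s \<in> H <+>\<^bsub>M\<^esub> S"
      using coeffs r unfolding leading_coeffs_def by blast
    then obtain h t' where h: "h \<in> H" and t': "t' \<in> S" and rs: "r \<odot>\<^bsub>M\<^esub> s = h \<oplus>\<^bsub>M\<^esub> t'"
      by (rule set_addE)
    have hc: "h \<in> carrier M" and t'c: "t' \<in> carrier M"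
      using h t' carr by blast+
    have "x = h \<oplus>\<^bsub>M\<^esub> (t \<oplus>\<^bsub>M\<^esub> t')"
      using x_eq rs tc hc t'c by (simp add: M.a_ac)
    then have "x \<ominus>\<^bsub>M\<^esub> h = t \<oplus>\<^bsub>M\<^esub> t'"
      using plus_minus_cancel_left tc hc t'c by simp
    then have "x \<ominus>\<^bsub>M\<^esub> h \<in> S"
      using submoduleE(5)[OF S t t'] by simp
    moreover have "x \<ominus>\<^bsub>M\<^esub> h \<in> H'"
      using submodule_minus[OF H' x] h \<open>H \<subseteq> H'\<close> by blast
    ultimately have "x \<ominus>\<^bsub>M\<^esub> h \<in> H' \<inter> S"
      by blast
    then have "h \<oplus>\<^bsub>M\<^esub> (x \<ominus>\<^bsub>M\<^esub> h) \<in> H"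
      using Int submoduleE(5)[OF H h] by blast
    then show "x \<in> H"
      using plus_minus_eq[OF hc xc] by simp
  qed
qed fact

lemma chain_Union_mem_if_leading_coeffs_bounded:
  assumes S: "submodule S R M" and s: "s \<in> carrier M"
    and sub: "\<And>H. H \<in> C \<Longrightarrow> submodule H R M"
    and H_subset: "\<And>H. H \<in> C \<Longrightarrow> H \<subseteq> S <+>\<^bsub>M\<^esub> cyclic_submod R M s"
    and chain: "\<And>H H'. H \<in> C \<Longrightarrow> H' \<in> C \<Longrightarrow> H \<subseteq> H' \<or> H' \<subseteq> H"
    and H\<^sub>0: "H\<^sub>0 \<in> C" "\<And>H. H \<in> C \<Longrightarrow> H \<inter> S \<subseteq> H\<^sub>0"
    and H\<^sub>1: "H\<^sub>1 \<in> C" "\<And>H. H \<in> C \<Longrightarrow> leading_coeffs R M S s H \<subseteq> leading_coeffs R M S s H\<^sub>1"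
  shows "\<Union>C \<in> C"
proof -
  obtain H\<^sub>2 where H\<^sub>2: "H\<^sub>2 \<in> C" "H\<^sub>0 \<subseteq> H\<^sub>2" "H\<^sub>1 \<subseteq> H\<^sub>2"
    using chain[OF H\<^sub>0(1) H\<^sub>1(1)] H\<^sub>0(1) H\<^sub>1(1) by blast
  have "H \<subseteq> H\<^sub>2" if H: "H \<in> C" for H
  proof (cases "H \<subseteq> H\<^sub>2")
    case False
    then have "H\<^sub>2 \<subseteq> H"
      using chain[OF H H\<^sub>2(1)] by blast
    moreover have "H \<inter> S \<subseteq> H\<^sub>2"
      using H H\<^sub>0(2) H\<^sub>2(2) by blast
    moreover have "leading_coeffs R M S s H \<subseteq> leading_coeffs R M S s H\<^sub>2"
      using H\<^sub>1(2)[OF H] leading_coeffs_mono[OF H\<^sub>2(3)] by blast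
    ultimately have "H = H\<^sub>2"
      by (rule submodule_eqI_leading_coeffs[OF S s sub[OF H\<^sub>2(1)] sub[OF H] _ H_subset[OF H]])
    then show ?thesis
      by simp
  qed simp
  then have "\<Union>C = H\<^sub>2"
    using H\<^sub>2(1) by blast
  then show ?thesis
    using H\<^sub>2(1) by simp
qed

lemma leading_coeffs_chain_bounded:
  assumes noetherian: "noetherian_ring R" and S: "submodule S R M" and s: "s \<in> carrier M"
    and "C \<noteq> {}" and chain: "subset.chain A C" and sub: "\<And>H. H \<in> C \<Longrightarrow> submodule H R M"
  obtains H\<^sub>1 where "H\<^sub>1 \<in> C" and "\<And>H. H \<in> C \<Longrightarrow> leading_coeffs R M S s H \<subseteq> leading_coeffs R M S s H\<^sub>1"
proof -
  have ideals: "leading_coeffs R M S s ` C \<subseteq> {J. ideal J R}"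
    using leading_coeffs_ideal[OF S s sub] by blast
  have "subset.chain {J. ideal J R} (leading_coeffs R M S s ` C)"
    by (rule subset_chain_image_mono[OF chain _ ideals]) (simp add: leading_coeffs_mono)
  then have "\<Union>(leading_coeffs R M S s ` C) \<in> leading_coeffs R M S s ` C"
    by (rule noetherian_ring.ideal_chain_is_trivial[OF noetherian, rotated]) (simp add: \<open>C \<noteq> {}\<close>)
  then show ?thesis
    using that by blast
qed

lemma chain_Union_mem_if_finitely_generated:
  assumes noetherian: "noetherian_ring R"
  shows "finite T \<Longrightarrow> T \<subseteq> carrier M \<Longrightarrow> C \<noteq> {} \<Longrightarrow>
    subset.chain {H. submodule H R M \<and> H \<subseteq> submod_span R M T} C \<Longrightarrow> \<Union>C \<in> C"
proof (induction T arbitrary: C rule: finite_induct)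
  case empty
  have "submod_span R M {} \<subseteq> {\<zero>\<^bsub>M\<^esub>}"
    by (rule submod_span_least[OF zero_submodule]) simp
  moreover have "submodule H R M" "H \<subseteq> submod_span R M {}" if "H \<in> C" for H
    using that empty.prems(3) unfolding subset_chain_def by auto
  ultimately have "H = {\<zero>\<^bsub>M\<^esub>}" if "H \<in> C" for H
    using that submodule_zero by blast
  then have "C = {{\<zero>\<^bsub>M\<^esub>}}"
    using empty.prems(2) by blast
  then show ?case
    by simp
next
  case (insert s T)
  let ?S = "submod_span R M T"
  have s: "s \<in> carrier M" and T: "T \<subseteq> carrier M"
    using insert.prems(1) by auto
  have S: "submodule ?S R M"
    by (rule submod_span_submodule[OF T])
  have sub: "submodule H R M" and "H \<subseteq> submod_span R M (insert s T)" if "H \<in> C" for H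
    using that insert.prems(3) unfolding subset_chain_def by auto
  then have H_subset: "H \<subseteq> ?S <+>\<^bsub>M\<^esub> cyclic_submod R M s" if "H \<in> C" for H
    using that span_insert_subset[OF s T] by blast
  have chain: "H \<subseteq> H' \<or> H' \<subseteq> H" if "H \<in> C" "H' \<in> C" for H H'
    using that insert.prems(3) unfolding subset_chain_def by auto
  have Int_sub: "(\<lambda>H. H \<inter> ?S) ` C \<subseteq> {H. submodule H R M \<and> H \<subseteq> ?S}"
    using submodule_Int[OF sub S] by auto
  have chain_Int: "subset.chain {H. submodule H R M \<and> H \<subseteq> ?S} ((\<lambda>H. H \<inter> ?S) ` C)"
    by (rule subset_chain_image_mono[OF insert.prems(3) _ Int_sub]) auto
  have "\<Union>((\<lambda>H. H \<inter> ?S) ` C) \<in> (\<lambda>H. H \<inter> ?S) ` C"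
    by (rule insert.IH[OF T _ chain_Int]) (simp add: insert.prems(2))
  then obtain H\<^sub>0 where H\<^sub>0: "H\<^sub>0 \<in> C" "\<Union>((\<lambda>H. H \<inter> ?S) ` C) = H\<^sub>0 \<inter> ?S"
    by (rule imageE) simp
  obtain H\<^sub>1 where H\<^sub>1: "H\<^sub>1 \<in> C" "\<And>H. H \<in> C \<Longrightarrow> leading_coeffs R M ?S s H \<subseteq> leading_coeffs R M ?S s H\<^sub>1"
    using leading_coeffs_chain_bounded[OF noetherian S s insert.prems(2,3) sub] by blast
  show ?case
  proof (rule chain_Union_mem_if_leading_coeffs_bounded[OF S s sub H_subset chain H\<^sub>0(1) _ H\<^sub>1(1)])
    show "H \<inter> ?S \<subseteq> H\<^sub>0" if "H \<in> C" for H
      using that H\<^sub>0(2) by blast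
    show "leading_coeffs R M ?S s H \<subseteq> leading_coeffs R M ?S s H\<^sub>1" if "H \<in> C" for H
      using that H\<^sub>1(2) by blast
  qed
qed

end

locale noetherian_fg_module = module R M + R?: noetherian_ring R for R M +
  assumes finitely_generated: "finitely_generated_module R M"
begin

lemma submodule_chain_Union_mem:
  assumes "C \<noteq> {}" and "subset.chain {H. submodule H R M} C"
  shows "\<Union>C \<in> C"
proof -
  obtain T where T: "finite T" "T \<subseteq> carrier M" "submod_span R M T = carrier M"
    using finitely_generated unfolding finitely_generated_module_def by blast
  have "subset.chain {H. submodule H R M \<and> H \<subseteq> submod_span R M T} C"
    using assms(2) submoduleE(1) unfolding T(3) subset_chain_def by auto
  then show ?thesis
    by (rule chain_Union_mem_if_finitely_generated[OF noetherian_ring_axioms T(1,2) assms(1)])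
qed

lemma maximal_submodule_exists:
  assumes "F \<noteq> {}" and "\<And>H. H \<in> F \<Longrightarrow> submodule H R M"
  shows "\<exists>K\<in>F. \<forall>X\<in>F. K \<subseteq> X \<longrightarrow> X = K"
proof (rule subset_Zorn_nonempty[OF assms(1)])
  fix C assume C: "C \<noteq> {}" and chain: "subset.chain F C"
  then have "subset.chain {H. submodule H R M} C"
    using assms(2) unfolding subset_chain_def by auto
  then have "\<Union>C \<in> C"
    by (rule submodule_chain_Union_mem[OF C])
  then show "\<Union>C \<in> F"
    using chain unfolding subset_chain_def by blast
qed

end

section \<open>Nakayama's lemma and Krull's intersection theorem\<close>

lemma (in cring) genideal_insert_subset:
  assumes A: "A \<subseteq> carrier R" and a: "a \<in> carrier R"
  shows "Idl (insert a A) \<subseteq> Idl A <+>\<^bsub>R\<^esub> PIdl a"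
proof (rule genideal_minimal[OF add_ideals[OF genideal_ideal[OF A] cgenideal_ideal[OF a]]])
  have "a \<in> Idl A <+>\<^bsub>R\<^esub> PIdl a"
    using set_add_def'[of R] additive_subgroup.zero_closed[OF ideal.axioms(1)[OF genideal_ideal[OF A]]]
      cgenideal_self[OF a] a by force
  moreover have "b \<in> Idl A <+>\<^bsub>R\<^esub> PIdl a" if "b \<in> A" for b
    using set_add_def'[of R] that genideal_self[OF A] cgenideal_self[OF a]
      additive_subgroup.zero_closed[OF ideal.axioms(1)[OF cgenideal_ideal[OF a]]] A by force
  ultimately show "insert a A \<subseteq> Idl A <+>\<^bsub>R\<^esub> PIdl a"
    by blast
qed

text \<open>The sum of the \<open>J\<^sup>s a\<^sup>p\<^sup>-\<^sup>s M\<close>, which contains \<open>(J + R a)\<^sup>p M\<close> by the binomial expansion.\<close>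

definition adic_mixed_sum ::
    "('a, 'c) ring_scheme \<Rightarrow> ('a, 'b, 'd) module_scheme \<Rightarrow> 'a set \<Rightarrow> 'a \<Rightarrow> nat \<Rightarrow> 'b set" where
  "adic_mixed_sum R M J a p =
     submod_span R M (\<Union>s\<le>p. adic_pow R M J (scalar_multiples M (a [^]\<^bsub>R\<^esub> (p - s))) s)"

context module
begin

lemma cyclic_submod_subset: "submodule N R M \<Longrightarrow> z \<in> N \<Longrightarrow> cyclic_submod R M z \<subseteq> N"
  unfolding cyclic_submod_def using submoduleE(4) by blast

lemma set_add_cyclic_eq_if_maximal:
  assumes N: "submodule N R M" and P: "submodule P R M" and "P \<subseteq> N"
    and max: "\<And>X. submodule X R M \<Longrightarrow> P \<subseteq> X \<Longrightarrow> X \<subseteq> N \<Longrightarrow> X = P \<or> X = N"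
    and z: "z \<in> N" "z \<notin> P"
  shows "P <+>\<^bsub>M\<^esub> cyclic_submod R M z = N"
proof -
  have zc: "z \<in> carrier M"
    using z(1) submoduleE(1)[OF N] by blast
  have "P \<subseteq> P <+>\<^bsub>M\<^esub> cyclic_submod R M z"
    by (rule set_add_upper1[OF cyclic_submodule[OF zc] submoduleE(1)[OF P]])
  moreover have "P <+>\<^bsub>M\<^esub> cyclic_submod R M z \<subseteq> N"
    by (rule set_add_least[OF N \<open>P \<subseteq> N\<close> cyclic_submod_subset[OF N z(1)]])
  moreover have "z \<in> P <+>\<^bsub>M\<^esub> cyclic_submod R M z"
    using set_add_upper2[OF P submoduleE(1)[OF cyclic_submodule[OF zc]]] cyclic_submod_self[OF zc]
    by blast
  ultimately show ?thesis
    using max[OF set_add_submodule[OF P cyclic_submodule[OF zc]]] z(2) by blast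
qed

lemma colon_maximalideal:
  assumes N: "submodule N R M" and P: "submodule P R M" and "P \<subseteq> N"
    and max: "\<And>X. submodule X R M \<Longrightarrow> P \<subseteq> X \<Longrightarrow> X \<subseteq> N \<Longrightarrow> X = P \<or> X = N"
    and x: "x \<in> N" "x \<notin> P"
  shows "maximalideal {r \<in> carrier R. r \<odot>\<^bsub>M\<^esub> x \<in> P} R"
proof -
  let ?m = "{r \<in> carrier R. r \<odot>\<^bsub>M\<^esub> x \<in> P}"
  have xc: "x \<in> carrier M"
    using x(1) submoduleE(1)[OF N] by blast
  have "J = carrier R" if J: "ideal J R" "?m \<subseteq> J" "J \<noteq> ?m" for J
  proof -
    obtain r where r: "r \<in> J" "r \<notin> ?m"
      using J(2,3) by blast
    have rc: "r \<in> carrier R"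
      using ideal.Icarr[OF J(1) r(1)] .
    have "r \<odot>\<^bsub>M\<^esub> x \<in> N" "r \<odot>\<^bsub>M\<^esub> x \<notin> P"
      using r(2) rc submoduleE(4)[OF N rc x(1)] by auto
    then have "x \<in> P <+>\<^bsub>M\<^esub> cyclic_submod R M (r \<odot>\<^bsub>M\<^esub> x)"
      using set_add_cyclic_eq_if_maximal[OF N P \<open>P \<subseteq> N\<close> max] x(1) by blast
    then obtain p c where p: "p \<in> P" and c: "c \<in> carrier R" and x_eq: "x = p \<oplus>\<^bsub>M\<^esub> c \<odot>\<^bsub>M\<^esub> (r \<odot>\<^bsub>M\<^esub> x)"
      unfolding cyclic_submod_def by (blast elim: set_addE)
    have pc: "p \<in> carrier M"
      using p submoduleE(1)[OF P] by blast
    have "(\<one>\<^bsub>R\<^esub> \<ominus>\<^bsub>R\<^esub> c \<otimes>\<^bsub>R\<^esub> r) \<odot>\<^bsub>M\<^esub> x = x \<ominus>\<^bsub>M\<^esub> (c \<otimes>\<^bsub>R\<^esub> r) \<odot>\<^bsub>M\<^esub> x"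
      using c rc xc by (simp add: R.minus_eq a_minus_def smult_l_distr smult_l_minus)
    also have "\<dots> = p"
      using x_eq plus_minus_cancel_right[OF pc, of "(c \<otimes>\<^bsub>R\<^esub> r) \<odot>\<^bsub>M\<^esub> x"] c rc xc
      by (simp add: smult_assoc1)
    finally have "\<one>\<^bsub>R\<^esub> \<ominus>\<^bsub>R\<^esub> c \<otimes>\<^bsub>R\<^esub> r \<in> J"
      using p c rc J(2) by auto
    moreover have "c \<otimes>\<^bsub>R\<^esub> r \<in> J"
      by (rule ideal.I_l_closed[OF J(1) r(1) c])
    ultimately have "(\<one>\<^bsub>R\<^esub> \<ominus>\<^bsub>R\<^esub> c \<otimes>\<^bsub>R\<^esub> r) \<oplus>\<^bsub>R\<^esub> c \<otimes>\<^bsub>R\<^esub> r \<in> J"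
      by (rule additive_subgroup.a_closed[OF ideal.axioms(1)[OF J(1)]])
    moreover have "(\<one>\<^bsub>R\<^esub> \<ominus>\<^bsub>R\<^esub> c \<otimes>\<^bsub>R\<^esub> r) \<oplus>\<^bsub>R\<^esub> c \<otimes>\<^bsub>R\<^esub> r = \<one>\<^bsub>R\<^esub>"
      using c rc by algebra
    ultimately show "J = carrier R"
      using ideal.one_imp_carrier[OF J(1)] by simp
  qed
  moreover have "\<one>\<^bsub>R\<^esub> \<notin> ?m"
    using x(2) xc by simp
  ultimately show ?thesis
    by (intro maximalidealI colon_ideal[OF P xc]) blast+
qed

lemma smult_adic_pow:
  assumes J: "J \<subseteq> carrier R" and a: "a \<in> carrier R"
    and X: "submodule X R M" and Y: "submodule Y R M" and XY: "\<And>x. x \<in> X \<Longrightarrow> a \<odot>\<^bsub>M\<^esub> x \<in> Y"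
  shows "u \<in> adic_pow R M J X s \<Longrightarrow> a \<odot>\<^bsub>M\<^esub> u \<in> adic_pow R M J Y s"
proof (induction s arbitrary: u)
  case (Suc s)
  let ?X = "adic_pow R M J X s" and ?Y = "adic_pow R M J Y s"
  have X': "?X \<subseteq> carrier M" and Y': "?Y \<subseteq> carrier M"
    using submoduleE(1)[OF adic_pow_submodule[OF X J]] submoduleE(1)[OF adic_pow_submodule[OF Y J]] .
  let ?G = "{r \<odot>\<^bsub>M\<^esub> v | r v. r \<in> J \<and> v \<in> ?X}"
  have G: "?G \<subseteq> carrier M"
    using J X' by blast
  have "a \<odot>\<^bsub>M\<^esub> g \<in> ideal_smult_submod R M J ?Y" if "g \<in> ?G" for g
  proof -
    obtain r v where r: "r \<in> J" and v: "v \<in> ?X" and g: "g = r \<odot>\<^bsub>M\<^esub> v"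
      using \<open>g \<in> ?G\<close> by blast
    have "a \<odot>\<^bsub>M\<^esub> (r \<odot>\<^bsub>M\<^esub> v) = r \<odot>\<^bsub>M\<^esub> (a \<odot>\<^bsub>M\<^esub> v)"
      using r v J X' a by (intro smult_comm) auto
    then show ?thesis
      using ideal_smult_submodI[OF r Suc.IH[OF v]] g by simp
  qed
  moreover have "u \<in> submod_span R M ?G"
    using Suc.prems by (simp add: ideal_smult_submod_def)
  ultimately have "a \<odot>\<^bsub>M\<^esub> u \<in> ideal_smult_submod R M J ?Y"
    by (rule smult_submod_span[OF ideal_smult_submod_submodule[OF J Y'] a G])
  then show ?case
    by simp
qed (use XY in simp)

lemma nat_pow_Suc_smult:
  "a \<in> carrier R \<Longrightarrow> x \<in> carrier M \<Longrightarrow> (a [^]\<^bsub>R\<^esub> Suc n) \<odot>\<^bsub>M\<^esub> x = a \<odot>\<^bsub>M\<^esub> ((a [^]\<^bsub>R\<^esub> n) \<odot>\<^bsub>M\<^esub> x)"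
  by (simp add: smult_assoc1[symmetric] R.m_comm)

lemma smult_scalar_multiples_pow:
  fixes t :: nat
  assumes a: "a \<in> carrier R" and "u \<in> scalar_multiples M (a [^]\<^bsub>R\<^esub> t)"
  shows "a \<odot>\<^bsub>M\<^esub> u \<in> scalar_multiples M (a [^]\<^bsub>R\<^esub> Suc t)"
proof -
  obtain x where x: "x \<in> carrier M" and u: "u = (a [^]\<^bsub>R\<^esub> t) \<odot>\<^bsub>M\<^esub> x"
    using assms(2) unfolding scalar_multiples_def by blast
  then have "a \<odot>\<^bsub>M\<^esub> u = (a [^]\<^bsub>R\<^esub> Suc t) \<odot>\<^bsub>M\<^esub> x"
    using nat_pow_Suc_smult[OF a x] by simp
  then show ?thesis
    using x unfolding scalar_multiples_def by blast
qed

lemma scalar_multiples_pow_antimono: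
  fixes m t :: nat
  assumes a: "a \<in> carrier R" and "m \<le> t"
  shows "scalar_multiples M (a [^]\<^bsub>R\<^esub> t) \<subseteq> scalar_multiples M (a [^]\<^bsub>R\<^esub> m)"
proof
  fix u assume "u \<in> scalar_multiples M (a [^]\<^bsub>R\<^esub> t)"
  then obtain x where x: "x \<in> carrier M" and u: "u = (a [^]\<^bsub>R\<^esub> t) \<odot>\<^bsub>M\<^esub> x"
    unfolding scalar_multiples_def by blast
  have "a [^]\<^bsub>R\<^esub> t = a [^]\<^bsub>R\<^esub> m \<otimes>\<^bsub>R\<^esub> a [^]\<^bsub>R\<^esub> (t - m)"
    using R.nat_pow_mult[OF a, of m "t - m"] \<open>m \<le> t\<close> by simp
  then have "u = (a [^]\<^bsub>R\<^esub> m) \<odot>\<^bsub>M\<^esub> ((a [^]\<^bsub>R\<^esub> (t - m)) \<odot>\<^bsub>M\<^esub> x)"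
    using u a x by (simp add: smult_assoc1)
  then show "u \<in> scalar_multiples M (a [^]\<^bsub>R\<^esub> m)"
    using a x unfolding scalar_multiples_def by blast
qed

lemma adic_mixed_sum_submodule:
  assumes J: "J \<subseteq> carrier R" and a: "a \<in> carrier R"
  shows "submodule (adic_mixed_sum R M J a p) R M"
proof -
  have "adic_pow R M J (scalar_multiples M (a [^]\<^bsub>R\<^esub> t)) s \<subseteq> carrier M" for t :: nat and s
    using submoduleE(1)[OF adic_pow_submodule[OF scalar_multiples_submodule[OF R.nat_pow_closed[OF a]] J]] .
  then show ?thesis
    unfolding adic_mixed_sum_def by (intro submod_span_submodule) blast
qed

lemma adic_pow_subset_adic_mixed_sum:
  assumes "s \<le> p"
  shows "adic_pow R M J (scalar_multiples M (a [^]\<^bsub>R\<^esub> (p - s))) s \<subseteq> adic_mixed_sum R M J a p"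
proof -
  have "adic_pow R M J (scalar_multiples M (a [^]\<^bsub>R\<^esub> (p - s))) s \<subseteq>
      (\<Union>s\<le>p. adic_pow R M J (scalar_multiples M (a [^]\<^bsub>R\<^esub> (p - s))) s)"
    using assms by blast
  also have "\<dots> \<subseteq> adic_mixed_sum R M J a p"
    unfolding adic_mixed_sum_def by (rule submod_span_superset)
  finally show ?thesis .
qed

lemma smult_genideal_insert_mem_adic_mixed_sum:
  assumes A: "A \<subseteq> carrier R" and a: "a \<in> carrier R" and r: "r \<in> Idl\<^bsub>R\<^esub> (insert a A)"
    and s: "s \<le> p" and u: "u \<in> adic_pow R M (Idl\<^bsub>R\<^esub> A) (scalar_multiples M (a [^]\<^bsub>R\<^esub> (p - s))) s"
  shows "r \<odot>\<^bsub>M\<^esub> u \<in> adic_mixed_sum R M (Idl\<^bsub>R\<^esub> A) a (Suc p)"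
proof -
  let ?J = "Idl\<^bsub>R\<^esub> A"
  have J: "?J \<subseteq> carrier R"
    using ideal.Icarr[OF R.genideal_ideal[OF A]] by blast
  have T: "submodule (adic_mixed_sum R M ?J a (Suc p)) R M"
    by (rule adic_mixed_sum_submodule[OF J a])
  obtain j c where j: "j \<in> ?J" and c: "c \<in> carrier R" and r_eq: "r = j \<oplus>\<^bsub>R\<^esub> c \<otimes>\<^bsub>R\<^esub> a"
    using r R.genideal_insert_subset[OF A a] unfolding set_add_def' cgenideal_def by blast
  have uc: "u \<in> carrier M"
    using u submoduleE(1)[OF adic_pow_submodule[OF scalar_multiples_submodule[OF R.nat_pow_closed[OF a]] J]]
    by blast
  have "j \<odot>\<^bsub>M\<^esub> u \<in> adic_pow R M ?J (scalar_multiples M (a [^]\<^bsub>R\<^esub> (Suc p - Suc s))) (Suc s)"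
    using ideal_smult_submodI[OF j u] by simp
  then have ju: "j \<odot>\<^bsub>M\<^esub> u \<in> adic_mixed_sum R M ?J a (Suc p)"
    using adic_pow_subset_adic_mixed_sum[of "Suc s" "Suc p"] s by blast
  have "a \<odot>\<^bsub>M\<^esub> u \<in> adic_pow R M ?J (scalar_multiples M (a [^]\<^bsub>R\<^esub> Suc (p - s))) s"
    using smult_adic_pow[OF J a scalar_multiples_submodule scalar_multiples_submodule
        smult_scalar_multiples_pow[OF a] u] a by simp
  then have "a \<odot>\<^bsub>M\<^esub> u \<in> adic_pow R M ?J (scalar_multiples M (a [^]\<^bsub>R\<^esub> (Suc p - s))) s"
    using Suc_diff_le[OF s] by simp
  then have "a \<odot>\<^bsub>M\<^esub> u \<in> adic_mixed_sum R M ?J a (Suc p)"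
    using adic_pow_subset_adic_mixed_sum[OF le_SucI[OF s]] by blast
  then have "c \<odot>\<^bsub>M\<^esub> (a \<odot>\<^bsub>M\<^esub> u) \<in> adic_mixed_sum R M ?J a (Suc p)"
    by (rule submoduleE(4)[OF T c])
  moreover have "r \<odot>\<^bsub>M\<^esub> u = j \<odot>\<^bsub>M\<^esub> u \<oplus>\<^bsub>M\<^esub> c \<odot>\<^bsub>M\<^esub> (a \<odot>\<^bsub>M\<^esub> u)"
    using r_eq j J c a uc by (auto simp: smult_l_distr smult_assoc1)
  ultimately show ?thesis
    using submoduleE(5)[OF T ju] by simp
qed

lemma adic_pow_genideal_insert_subset:
  assumes A: "A \<subseteq> carrier R" and a: "a \<in> carrier R"
  shows "adic_pow R M (Idl\<^bsub>R\<^esub> (insert a A)) (carrier M) p \<subseteq> adic_mixed_sum R M (Idl\<^bsub>R\<^esub> A) a p"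
proof (induction p)
  case 0
  have "carrier M \<subseteq> scalar_multiples M (a [^]\<^bsub>R\<^esub> (0::nat))"
    unfolding scalar_multiples_def by (auto intro: rev_image_eqI)
  then show ?case
    using adic_pow_subset_adic_mixed_sum[where s=0 and p=0 and J="Idl\<^bsub>R\<^esub> A" and a=a] by auto
next
  case (Suc p)
  let ?I = "Idl\<^bsub>R\<^esub> (insert a A)" and ?J = "Idl\<^bsub>R\<^esub> A"
  have I: "?I \<subseteq> carrier R" and J: "?J \<subseteq> carrier R"
    using ideal.Icarr[OF R.genideal_ideal] A a by blast+
  have "adic_pow R M ?J (scalar_multiples M (a [^]\<^bsub>R\<^esub> t)) s \<subseteq> carrier M" for t :: nat and s
    using submoduleE(1)[OF adic_pow_submodule[OF scalar_multiples_submodule[OF R.nat_pow_closed[OF a]] J]] .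
  then have U: "(\<Union>s\<le>p. adic_pow R M ?J (scalar_multiples M (a [^]\<^bsub>R\<^esub> (p - s))) s) \<subseteq> carrier M"
    by blast
  have T: "submodule (adic_mixed_sum R M ?J a p) R M"
    by (rule adic_mixed_sum_submodule[OF J a])
  have "ideal_smult_submod R M ?I (adic_mixed_sum R M ?J a p) \<subseteq> adic_mixed_sum R M ?J a (Suc p)"
    unfolding adic_mixed_sum_def[of R M ?J a p]
  proof (rule ideal_smult_submod_span[OF I U adic_mixed_sum_submodule[OF J a]])
    fix r u assume "r \<in> ?I" "u \<in> (\<Union>s\<le>p. adic_pow R M ?J (scalar_multiples M (a [^]\<^bsub>R\<^esub> (p - s))) s)"
    then show "r \<odot>\<^bsub>M\<^esub> u \<in> adic_mixed_sum R M ?J a (Suc p)"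
      using smult_genideal_insert_mem_adic_mixed_sum[OF A a] by blast
  qed
  moreover have "adic_pow R M ?I (carrier M) (Suc p) \<subseteq> ideal_smult_submod R M ?I (adic_mixed_sum R M ?J a p)"
    using ideal_smult_submod_mono[OF I submoduleE(1)[OF T] Suc.IH] by simp
  ultimately show ?case
    by blast
qed

lemma adic_mixed_sum_subset:
  fixes n m :: nat
  assumes K: "submodule K R M" and J: "J \<subseteq> carrier R" and a: "a \<in> carrier R"
    and JK: "adic_pow R M J (carrier M) n \<subseteq> K" and aK: "scalar_multiples M (a [^]\<^bsub>R\<^esub> m) \<subseteq> K"
  shows "adic_mixed_sum R M J a (n + m) \<subseteq> K"
  unfolding adic_mixed_sum_def
proof (rule submod_span_least[OF K], rule UN_least)
  fix s assume "s \<in> {..n + m}"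
  let ?aM = "scalar_multiples M (a [^]\<^bsub>R\<^esub> (n + m - s))"
  have aM: "submodule ?aM R M"
    using scalar_multiples_submodule a by simp
  show "adic_pow R M J ?aM s \<subseteq> K"
  proof (cases "n \<le> s")
    case True
    have "adic_pow R M J ?aM s \<subseteq> adic_pow R M J (carrier M) s"
      by (rule adic_pow_mono[OF carrier_is_submodule J submoduleE(1)[OF aM]])
    also have "\<dots> \<subseteq> adic_pow R M J (carrier M) n"
      by (rule adic_pow_antimono[OF carrier_is_submodule J True])
    finally show ?thesis
      using JK by blast
  next
    case False
    have "adic_pow R M J ?aM s \<subseteq> ?aM"
      by (rule adic_pow_subset[OF aM J])
    also have "\<dots> \<subseteq> scalar_multiples M (a [^]\<^bsub>R\<^esub> m)"
      using False by (intro scalar_multiples_pow_antimono[OF a]) simp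
    finally show ?thesis
      using aK by blast
  qed
qed

lemma adic_pow_genideal_subset:
  assumes K: "submodule K R M"
  shows "finite A \<Longrightarrow> A \<subseteq> carrier R \<Longrightarrow> (\<And>a. a \<in> A \<Longrightarrow> \<exists>m::nat. scalar_multiples M (a [^]\<^bsub>R\<^esub> m) \<subseteq> K) \<Longrightarrow>
    \<exists>n. adic_pow R M (Idl\<^bsub>R\<^esub> A) (carrier M) n \<subseteq> K"
proof (induction A rule: finite_induct)
  case empty
  have "Idl\<^bsub>R\<^esub> {} \<subseteq> {\<zero>\<^bsub>R\<^esub>}"
    by (rule R.genideal_minimal[OF R.zeroideal]) simp
  then have "adic_pow R M (Idl\<^bsub>R\<^esub> {}) (carrier M) 1 \<subseteq> K"
    using submodule_zero[OF K] by (auto intro!: ideal_smult_submod_least[OF K])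
  then show ?case
    by blast
next
  case (insert a A)
  have a: "a \<in> carrier R" and A: "A \<subseteq> carrier R"
    using insert.prems(1) by auto
  obtain n where n: "adic_pow R M (Idl\<^bsub>R\<^esub> A) (carrier M) n \<subseteq> K"
    using insert.IH[OF A] insert.prems(2) by blast
  obtain m :: nat where m: "scalar_multiples M (a [^]\<^bsub>R\<^esub> m) \<subseteq> K"
    using insert.prems(2) by blast
  have "Idl\<^bsub>R\<^esub> A \<subseteq> carrier R"
    using ideal.Icarr[OF R.genideal_ideal[OF A]] by blast
  then have "adic_pow R M (Idl\<^bsub>R\<^esub> (insert a A)) (carrier M) (n + m) \<subseteq> K"
    using adic_pow_genideal_insert_subset[OF A a, of "n + m"] adic_mixed_sum_subset[OF K _ a n m]
    by blast
  then show ?case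
    by blast
qed

end

context noetherian_fg_module
begin

lemma nakayama:
  assumes I: "ideal I R" and jac: "I \<subseteq> jacobson_radical R"
    and N: "submodule N R M" and IN: "ideal_smult_submod R M I N = N"
  shows "N = {\<zero>\<^bsub>M\<^esub>}"
proof (rule ccontr)
  assume "N \<noteq> {\<zero>\<^bsub>M\<^esub>}"
  let ?F = "{P. submodule P R M \<and> P \<subseteq> N \<and> P \<noteq> N}"
  have "{\<zero>\<^bsub>M\<^esub>} \<in> ?F"
    using zero_submodule submodule_zero[OF N] \<open>N \<noteq> {\<zero>\<^bsub>M\<^esub>}\<close> by blast
  then have "\<exists>P\<in>?F. \<forall>X\<in>?F. P \<subseteq> X \<longrightarrow> X = P"
    by (intro maximal_submodule_exists) auto
  then obtain P where P: "submodule P R M" "P \<subseteq> N" "P \<noteq> N"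
    and P_max': "\<forall>X\<in>?F. P \<subseteq> X \<longrightarrow> X = P"
    by blast
  have P_max: "X = P \<or> X = N" if "submodule X R M" "P \<subseteq> X" "X \<subseteq> N" for X
    using that P_max' by blast
  obtain x where x: "x \<in> N" "x \<notin> P"
    using P(2,3) by blast
  have xc: "x \<in> carrier M"
    using x(1) submoduleE(1)[OF N] by blast
  have "jacobson_radical R \<subseteq> {r \<in> carrier R. r \<odot>\<^bsub>M\<^esub> x \<in> P}"
    using colon_maximalideal[OF N P(1,2) P_max x] unfolding jacobson_radical_def by blast
  then have I_colon: "I \<subseteq> {r \<in> carrier R. r \<odot>\<^bsub>M\<^esub> x \<in> P}"
    using jac by blast
  have "ideal_smult_submod R M I N \<subseteq> P"
  proof (rule ideal_smult_submod_least[OF P(1)])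
    fix r y assume r: "r \<in> I" and y: "y \<in> N"
    have rc: "r \<in> carrier R"
      using ideal.Icarr[OF I r] .
    obtain p c where p: "p \<in> P" and c: "c \<in> carrier R" and y_eq: "y = p \<oplus>\<^bsub>M\<^esub> c \<odot>\<^bsub>M\<^esub> x"
      using y set_add_cyclic_eq_if_maximal[OF N P(1,2) P_max x]
      unfolding cyclic_submod_def by (blast elim: set_addE)
    have "r \<odot>\<^bsub>M\<^esub> y = r \<odot>\<^bsub>M\<^esub> p \<oplus>\<^bsub>M\<^esub> (r \<otimes>\<^bsub>R\<^esub> c) \<odot>\<^bsub>M\<^esub> x"
      using y_eq rc c xc p submoduleE(1)[OF P(1)] by (auto simp: smult_r_distr smult_assoc1)
    moreover have "(r \<otimes>\<^bsub>R\<^esub> c) \<odot>\<^bsub>M\<^esub> x \<in> P"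
      using ideal.I_r_closed[OF I r c] I_colon by blast
    ultimately show "r \<odot>\<^bsub>M\<^esub> y \<in> P"
      using submoduleE(4,5)[OF P(1)] rc p by simp
  qed
  then show False
    using IN x by blast
qed

lemma pow_colon_stabilizes:
  assumes K: "submodule K R M" and a: "a \<in> carrier R"
  shows "\<exists>m::nat. \<forall>x\<in>carrier M. (a [^]\<^bsub>R\<^esub> Suc m) \<odot>\<^bsub>M\<^esub> x \<in> K \<longrightarrow> (a [^]\<^bsub>R\<^esub> m) \<odot>\<^bsub>M\<^esub> x \<in> K"
proof -
  define L where "L j = {x \<in> carrier M. (a [^]\<^bsub>R\<^esub> (j::nat)) \<odot>\<^bsub>M\<^esub> x \<in> K}" for j
  have L: "submodule (L j) R M" for j
    unfolding L_def using a by (intro smult_preimage_submodule[OF K]) simp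
  have "\<exists>H\<in>range L. \<forall>X\<in>range L. H \<subseteq> X \<longrightarrow> X = H"
    by (rule maximal_submodule_exists) (use L in auto)
  then obtain H where "H \<in> range L" and H: "\<forall>X\<in>range L. H \<subseteq> X \<longrightarrow> X = H"
    by blast
  then obtain m where "H = L m"
    by blast
  then have m: "L j = L m" if "L m \<subseteq> L j" for j
    using H that by blast
  have "L m \<subseteq> L (Suc m)"
    using submoduleE(4)[OF K a] nat_pow_Suc_smult[OF a] unfolding L_def by auto
  then have "L (Suc m) = L m"
    by (rule m)
  then have "\<forall>x\<in>carrier M. (a [^]\<^bsub>R\<^esub> Suc m) \<odot>\<^bsub>M\<^esub> x \<in> K \<longrightarrow> (a [^]\<^bsub>R\<^esub> m) \<odot>\<^bsub>M\<^esub> x \<in> K"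
    unfolding L_def by blast
  then show ?thesis
    by blast
qed

text \<open>Since the colon chain \<open>K : a\<^sup>j\<close> stabilises at some \<open>m\<close>, the larger submodule \<open>a\<^sup>m M + K\<close>
  still meets \<open>N\<close> in \<open>I N\<close>; maximality of \<open>K\<close> then forces \<open>a\<^sup>m M \<subseteq> K\<close>.\<close>

lemma pow_scalar_multiples_subset_if_maximal:
  assumes I: "I \<subseteq> carrier R" and a: "a \<in> I" and N: "submodule N R M"
    and K: "submodule K R M" and KN: "K \<inter> N = ideal_smult_submod R M I N"
    and K_max: "\<And>K'. submodule K' R M \<Longrightarrow> K \<subseteq> K' \<Longrightarrow> K' \<inter> N = ideal_smult_submod R M I N \<Longrightarrow> K' = K"
  shows "\<exists>m::nat. scalar_multiples M (a [^]\<^bsub>R\<^esub> m) \<subseteq> K"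
proof -
  have ac: "a \<in> carrier R"
    using a I by blast
  obtain m :: nat where m: "\<And>x. x \<in> carrier M \<Longrightarrow> (a [^]\<^bsub>R\<^esub> Suc m) \<odot>\<^bsub>M\<^esub> x \<in> K \<Longrightarrow> (a [^]\<^bsub>R\<^esub> m) \<odot>\<^bsub>M\<^esub> x \<in> K"
    using pow_colon_stabilizes[OF K ac] by blast
  let ?aM = "scalar_multiples M (a [^]\<^bsub>R\<^esub> m)"
  have aM: "submodule ?aM R M"
    using scalar_multiples_submodule ac by simp
  have "y \<in> K" if y: "y \<in> (?aM <+>\<^bsub>M\<^esub> K) \<inter> N" for y
  proof -
    obtain x k where x: "x \<in> carrier M" and k: "k \<in> K" and y_eq: "y = (a [^]\<^bsub>R\<^esub> m) \<odot>\<^bsub>M\<^esub> x \<oplus>\<^bsub>M\<^esub> k"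
      using y unfolding scalar_multiples_def by (blast elim: set_addE)
    have kc: "k \<in> carrier M" and amx: "(a [^]\<^bsub>R\<^esub> m) \<odot>\<^bsub>M\<^esub> x \<in> carrier M"
      using k submoduleE(1)[OF K] x ac by auto
    have "a \<odot>\<^bsub>M\<^esub> y \<in> K"
      using ideal_smult_submodI[OF a, of y N] y KN by blast
    then have "a \<odot>\<^bsub>M\<^esub> y \<ominus>\<^bsub>M\<^esub> a \<odot>\<^bsub>M\<^esub> k \<in> K"
      by (rule submodule_minus[OF K _ submoduleE(4)[OF K ac k]])
    moreover have "a \<odot>\<^bsub>M\<^esub> y \<ominus>\<^bsub>M\<^esub> a \<odot>\<^bsub>M\<^esub> k = a \<odot>\<^bsub>M\<^esub> ((a [^]\<^bsub>R\<^esub> m) \<odot>\<^bsub>M\<^esub> x)"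
      using y_eq kc amx ac by (simp add: smult_r_distr plus_minus_cancel_right)
    also have "\<dots> = (a [^]\<^bsub>R\<^esub> Suc m) \<odot>\<^bsub>M\<^esub> x"
      by (rule nat_pow_Suc_smult[symmetric, OF ac x])
    ultimately have "(a [^]\<^bsub>R\<^esub> m) \<odot>\<^bsub>M\<^esub> x \<in> K"
      using m[OF x] by simp
    then show "y \<in> K"
      using submoduleE(5)[OF K _ k] y_eq by simp
  qed
  then have "(?aM <+>\<^bsub>M\<^esub> K) \<inter> N = ideal_smult_submod R M I N"
    using KN set_add_upper2[OF aM submoduleE(1)[OF K]] by blast
  then have "?aM <+>\<^bsub>M\<^esub> K = K"
    using K_max[OF set_add_submodule[OF aM K] set_add_upper2[OF aM submoduleE(1)[OF K]]] by blast
  then show ?thesis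
    using set_add_upper1[OF K submoduleE(1)[OF aM]] by blast
qed

lemma krull_intersection:
  assumes I: "ideal I R" and jac: "I \<subseteq> jacobson_radical R"
  shows "(\<Inter>n. adic_pow R M I (carrier M) n) = {\<zero>\<^bsub>M\<^esub>}"
proof -
  let ?N = "\<Inter>n. adic_pow R M I (carrier M) n"
  have Ic: "I \<subseteq> carrier R"
    using ideal.Icarr[OF I] by blast
  have N: "submodule ?N R M"
    by (rule submodule_Inter) (use adic_pow_submodule[OF carrier_is_submodule Ic] in auto)
  have IN: "ideal_smult_submod R M I ?N \<subseteq> ?N"
    by (rule ideal_smult_submod_subset[OF N Ic])
  let ?F = "{K. submodule K R M \<and> K \<inter> ?N = ideal_smult_submod R M I ?N}"
  have "ideal_smult_submod R M I ?N \<in> ?F"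
    using ideal_smult_submod_submodule[OF Ic submoduleE(1)[OF N]] IN by blast
  then have "\<exists>K\<in>?F. \<forall>X\<in>?F. K \<subseteq> X \<longrightarrow> X = K"
    by (intro maximal_submodule_exists) auto
  then obtain K where K: "submodule K R M" and KN: "K \<inter> ?N = ideal_smult_submod R M I ?N"
    and K_max: "\<forall>X\<in>?F. K \<subseteq> X \<longrightarrow> X = K"
    by blast
  obtain A where A: "A \<subseteq> carrier R" "finite A" "I = Idl\<^bsub>R\<^esub> A"
    using finetely_gen[OF I] by blast
  have "\<exists>m::nat. scalar_multiples M (a [^]\<^bsub>R\<^esub> m) \<subseteq> K" if "a \<in> A" for a
  proof (rule pow_scalar_multiples_subset_if_maximal[OF Ic _ N K KN])
    show "a \<in> I"
      using that R.genideal_self[OF A(1)] A(3) by blast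
    show "K' = K" if "submodule K' R M" "K \<subseteq> K'" "K' \<inter> ?N = ideal_smult_submod R M I ?N" for K'
      using K_max that by blast
  qed
  then obtain n where n: "adic_pow R M I (carrier M) n \<subseteq> K"
    using adic_pow_genideal_subset[OF K A(2,1)] unfolding A(3) by blast
  have "?N \<subseteq> adic_pow R M I (carrier M) n"
    by (rule INT_lower) simp
  then have "ideal_smult_submod R M I ?N = ?N"
    using KN n by blast
  then show ?thesis
    by (rule nakayama[OF I jac N])
qed

section \<open>The greatest complete submodule\<close>

lemma greatest_adically_complete_submodule:
  assumes I: "ideal I R" and jac: "I \<subseteq> jacobson_radical R"
  obtains C where "submodule C R M" and "adically_complete R M I C"
    and "\<And>N. submodule N R M \<Longrightarrow> adically_complete R M I N \<Longrightarrow> N \<subseteq> C"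
proof -
  have Ic: "I \<subseteq> carrier R"
    using ideal.Icarr[OF I] by blast
  let ?F = "{C. submodule C R M \<and> adically_complete R M I C}"
  have "{\<zero>\<^bsub>M\<^esub>} \<in> ?F"
    using zero_submodule adically_complete_zero[OF Ic] by blast
  then have "\<exists>C\<in>?F. \<forall>X\<in>?F. C \<subseteq> X \<longrightarrow> X = C"
    by (intro maximal_submodule_exists) auto
  then obtain C where C: "submodule C R M" "adically_complete R M I C"
    and C_max: "\<And>X. X \<in> ?F \<Longrightarrow> C \<subseteq> X \<Longrightarrow> X = C"
    by blast
  have "N \<subseteq> C" if N: "submodule N R M" "adically_complete R M I N" for N
  proof -
    have "C <+>\<^bsub>M\<^esub> N \<in> ?F"
      using set_add_submodule[OF C(1) N(1)]
        adically_complete_set_add[OF Ic C(1) N(1) C(2) N(2) krull_intersection[OF I jac]] by blast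
    then have "C <+>\<^bsub>M\<^esub> N = C"
      using C_max set_add_upper1[OF N(1) submoduleE(1)[OF C(1)]] by blast
    then show ?thesis
      using set_add_upper2[OF C(1) submoduleE(1)[OF N(1)]] by blast
  qed
  then show ?thesis
    using that C by blast
qed

end

theorem lemma1p1:
  fixes R :: "('a, 'c) ring_scheme" and M :: "('a, 'b, 'd) module_scheme" and I :: "'a set"
  assumes "cring R" and "noetherian_ring R"
    and "ideal I R" and "I \<subseteq> jacobson_radical R"
    and "module R M" and "finitely_generated_module R M"
  shows "\<exists>!C. submodule C R M \<and> adically_complete R M I C \<and>
           (\<forall>N. submodule N R M \<and> adically_complete R M I N \<and> C \<subseteq> N \<longrightarrow> N = C)"
proof -
  interpret noetherian_fg_module R M
    using assms(2,5,6) by (intro noetherian_fg_module.intro noetherian_fg_module_axioms.intro)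
  obtain C where C: "submodule C R M" "adically_complete R M I C"
    and greatest: "\<And>N. submodule N R M \<Longrightarrow> adically_complete R M I N \<Longrightarrow> N \<subseteq> C"
    using greatest_adically_complete_submodule[OF assms(3,4)] by blast
  show ?thesis
  proof (rule ex1I)
    show "submodule C R M \<and> adically_complete R M I C \<and>
        (\<forall>N. submodule N R M \<and> adically_complete R M I N \<and> C \<subseteq> N \<longrightarrow> N = C)"
      using C greatest by blast
    show "C' = C" if "submodule C' R M \<and> adically_complete R M I C' \<and>
        (\<forall>N. submodule N R M \<and> adically_complete R M I N \<and> C' \<subseteq> N \<longrightarrow> N = C')" for C'
      using that C greatest by blast
  qed
qed

end
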